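(* For every integer $m\ge 0$ and every $n\ge 2$, $$l_n(x,m,s,q)=\big(x-(1-q)\,s\,q^{-m}D_q\big)\,l_{n-1}(x,m,s,q)+s\,q^{-m}\lambda_{n-2}(m,q)\,l_{n-2}(x,m,s,q),$$ where $\lambda_0(m,q)=\frac{1+q^m}{[m+1]}$ and $\lambda_n(m,q)=\frac{[n+1]\,[n+2m]}{[n+m]\,[n+m+1]}$ for $n\ge 1$, and $D_q$ is the $q$-derivative in $x$: $D_qf(x)=\frac{f(x)-f(qx)}{(1-q)x}$.
   Context: $q$ is an indeterminate; $[n]=\frac{1-q^n}{1-q}=1+q+\dots+q^{n-1}$, $[n]!=[1][2]\cdots[n]$, $[0]!=1$. For an integer $m\ge0$ and indeterminates $x,s$, $$l_n(x,m,s,q)=\sum_{k=0}^{\lfloor n/2\rfloor}s^k q^{\binom k2}\frac{[n]!}{[k]!\,[n-2k]!}\,\frac{[m+n-k-1]!}{[m+n-1]!}\,x^{n-2k}\quad (n\ge1),\qquad l_0(x,m,s,q)=1.$$ *)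

theory Defs
  imports Main
begin

definition qint :: "'a::field \<Rightarrow> nat \<Rightarrow> 'a" where
  "qint q n = (\<Sum>i<n. q ^ i)"

definition qfact :: "'a::field \<Rightarrow> nat \<Rightarrow> 'a" where
  "qfact q n = (\<Prod>i=1..n. qint q i)"

definition lpoly :: "nat \<Rightarrow> 'a::field \<Rightarrow> nat \<Rightarrow> 'a \<Rightarrow> 'a \<Rightarrow> 'a" where
  "lpoly n x m s q = (if n = 0 then 1 else
     (\<Sum>k\<le>n div 2. s ^ k * q ^ (k choose 2)
        * (qfact q n / (qfact q k * qfact q (n - 2*k)))
        * (qfact q (m + n - k - 1) / qfact q (m + n - 1))
        * x ^ (n - 2*k)))"

definition Dq :: "'a::field \<Rightarrow> ('a \<Rightarrow> 'a) \<Rightarrow> 'a \<Rightarrow> 'a" where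
  "Dq q f x = (f x - f (q * x)) / ((1 - q) * x)"

definition qlambda :: "nat \<Rightarrow> nat \<Rightarrow> 'a::field \<Rightarrow> 'a" where
  "qlambda n m q = (if n = 0 then (1 + q ^ m) / qint q (m + 1)
     else qint q (n + 1) * qint q (n + 2*m) / (qint q (n + m) * qint q (n + m + 1)))"

end

theory Submission
  imports Defs
begin

(* Proof of the three-term recurrence
     l_n = (x - (1-q) s q^-m D_q) l_(n-1) + s q^-m lambda_(n-2) l_(n-2),   n >= 2.
   Write l_n = sum_k s^k c(n,k) x^(n-2k).  Both operator terms act monomialwise:
   x raises the degree, and D_q x^d = [d] x^(d-1), so that (1-q) D_q x^d = (1-q^d) x^(d-1).
   Hence, with n = N + 2, the theorem amounts to the coefficient recurrence
     c(N+2,j+1) = c(N+1,j+1) - q^-m (1 - q^(N+1-2j)) c(N+1,j) + q^-m lambda_N c(N,j). *)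

lemma one_minus_q_qint: "(1 - q) * qint q n = 1 - q ^ n"
  unfolding qint_def by (rule one_diff_power_eq[symmetric])

lemma qint_0 [simp]: "qint q 0 = 0"
  unfolding qint_def by simp

lemma qint_closed: "(q::'a::field) \<noteq> 1 \<Longrightarrow> qint q n = (1 - q ^ n) / (1 - q)"
  using one_minus_q_qint[of q n] by (simp add: field_simps)

lemma qint_add: "qint (q::'a::field) (a + b) = qint q a + q ^ a * qint q b"
proof (cases "q = 1")
  case True
  then show ?thesis unfolding qint_def by simp
next
  case False
  then show ?thesis by (simp add: qint_closed power_add field_simps)
qed

lemma qint_nonzero:
  assumes "\<forall>k\<ge>1. (q::'a::field) ^ k \<noteq> 1" and "n \<ge> 1"
  shows "qint q n \<noteq> 0"
  using one_minus_q_qint[of q n] assms by force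

lemma qfact_0 [simp]: "qfact q 0 = 1"
  unfolding qfact_def by simp

lemma qfact_Suc: "qfact q (Suc n) = qfact q n * qint q (Suc n)"
  unfolding qfact_def by simp

lemma qfact_pred: "n \<ge> 1 \<Longrightarrow> qfact q n = qfact q (n - 1) * qint q n"
  using qfact_Suc[of q "n - 1"] by simp

lemma qfact_nonzero:
  assumes "\<forall>k\<ge>1. (q::'a::field) ^ k \<noteq> 1"
  shows "qfact q n \<noteq> 0"
  unfolding qfact_def using qint_nonzero[OF assms] by simp

(* With N = a + 2j it is the
   coefficient identity below after all q-factorials are cancelled; multiplying by
   (1 - q)^2 turns it into a polynomial identity in q^a, q^j, q^m. *)
lemma key_identity:
  fixes q :: "'a::field"
  assumes "q \<noteq> 1" and N: "N = a + 2 * j"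
  shows "q ^ m * q ^ j * qint q (N + 2) * qint q (m + N - j)
       = q ^ m * q ^ j * qint q a * qint q (m + N + 1)
         - (1 - q) * qint q (j + 1) * qint q (m + N + 1) * qint q (m + N - j)
         + qint q (j + 1) * qint q (N + 2 * m)"
proof -
  define A B C where "A = q ^ a" and "B = q ^ j" and "C = q ^ m"
  have d: "1 - q \<noteq> 0" using assms(1) by simp
  have pow: "q ^ (N + 2) = q^2 * A * B^2" "q ^ (m + N - j) = C * A * B"
    "q ^ (m + N + 1) = q * C * A * B^2" "q ^ (j + 1) = q * B" "q ^ (N + 2 * m) = A * B^2 * C^2"
    unfolding A_def B_def C_def N by (simp_all add: power_add power_mult power2_eq_square mult_ac)
  have "C * B * (1 - q^2 * A * B^2) * (1 - C * A * B)
      = C * B * (1 - A) * (1 - q * C * A * B^2) - (1 - q * B) * (1 - q * C * A * B^2) * (1 - C * A * B)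
        + (1 - q * B) * (1 - A * B^2 * C^2)"
    by (simp add: algebra_simps power2_eq_square)
  moreover have "(1 - q)^2 * (q ^ m * q ^ j * qint q (N + 2) * qint q (m + N - j))
      = C * B * ((1 - q) * qint q (N + 2)) * ((1 - q) * qint q (m + N - j))"
    unfolding B_def C_def by (simp add: power2_eq_square algebra_simps)
  moreover have "(1 - q)^2 * (q ^ m * q ^ j * qint q a * qint q (m + N + 1)
         - (1 - q) * qint q (j + 1) * qint q (m + N + 1) * qint q (m + N - j)
         + qint q (j + 1) * qint q (N + 2 * m))
      = C * B * ((1 - q) * qint q a) * ((1 - q) * qint q (m + N + 1))
        - ((1 - q) * qint q (j + 1)) * ((1 - q) * qint q (m + N + 1)) * ((1 - q) * qint q (m + N - j))
        + ((1 - q) * qint q (j + 1)) * ((1 - q) * qint q (N + 2 * m))"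
    unfolding B_def C_def by (simp add: power2_eq_square algebra_simps)
  ultimately have "(1 - q)^2 * (q ^ m * q ^ j * qint q (N + 2) * qint q (m + N - j))
      = (1 - q)^2 * (q ^ m * q ^ j * qint q a * qint q (m + N + 1)
         - (1 - q) * qint q (j + 1) * qint q (m + N + 1) * qint q (m + N - j)
         + qint q (j + 1) * qint q (N + 2 * m))"
    unfolding one_minus_q_qint pow A_def by simp
  then show ?thesis using d by simp
qed

(* Apart from the degenerate case m = N = 0, lambda_N is given by the generic formula
   [N+1][N+2m] / ([N+m][N+m+1]); for N = 0 this uses [2m] = (1 + q^m) [m]. *)
lemma qlambda_eq:
  assumes qk: "\<forall>k\<ge>1. (q::'a::field) ^ k \<noteq> 1" and "m + N \<ge> 1"
  shows "qlambda N m q * qint q (N + m) * qint q (N + m + 1) = qint q (N + 1) * qint q (N + 2 * m)"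
proof (cases "N = 0")
  case True
  have "qint q (2 * m) = (1 + q ^ m) * qint q m"
    using qint_add[of q m m] by (simp add: algebra_simps flip: mult_2)
  moreover have "qint q (m + 1) \<noteq> 0" using qint_nonzero[OF qk] by simp
  ultimately show ?thesis unfolding qlambda_def using True by (simp add: qint_def)
next
  case False
  have "qint q (N + m) \<noteq> 0" "qint q (N + m + 1) \<noteq> 0"
    using qint_nonzero[OF qk] False by simp_all
  then show ?thesis unfolding qlambda_def using False by simp
qed

(* The coefficient of s^k x^(n-2k) in l_n, extended by 0 when 2k > n. *)
definition lcoeff :: "'a::field \<Rightarrow> nat \<Rightarrow> nat \<Rightarrow> nat \<Rightarrow> 'a" where
  "lcoeff q m n k = (if 2 * k \<le> n then q ^ (k choose 2)
       * (qfact q n / (qfact q k * qfact q (n - 2 * k)))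
       * (qfact q (m + n - k - 1) / qfact q (m + n - 1)) else 0)"

lemma lcoeff_0:
  assumes "\<forall>k\<ge>1. (q::'a::field) ^ k \<noteq> 1"
  shows "lcoeff q m n 0 = 1"
  unfolding lcoeff_def using qfact_nonzero[OF assms] by (simp add: numeral_2_eq_2)

lemma lcoeff_raise_n:
  assumes qk: "\<forall>k\<ge>1. (q::'a::field) ^ k \<noteq> 1" and "2 * k \<le> n" and "m + n \<ge> 1"
  shows "lcoeff q m (n + 1) k * qint q (n + 1 - 2 * k) * qint q (m + n)
       = qint q (n + 1) * qint q (m + n - k) * lcoeff q m n k"
proof -
  have "qfact q (n + 1 - 2 * k) = qfact q (n - 2 * k) * qint q (n + 1 - 2 * k)"
    using qfact_Suc[of q "n - 2 * k"] assms(2) by (simp add: Suc_diff_le)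
  moreover have "qfact q (m + (n + 1) - k - 1) = qfact q (m + n - k - 1) * qint q (m + n - k)"
    using qfact_pred[of "m + n - k" q] assms(2,3) by simp
  moreover have "qfact q (m + (n + 1) - 1) = qfact q (m + n - 1) * qint q (m + n)"
    using qfact_pred[of "m + n" q] assms(3) by simp
  moreover have "qfact q (n + 1) = qfact q n * qint q (n + 1)"
    using qfact_Suc[of q n] by simp
  moreover have "qint q (m + n) \<noteq> 0" "qint q (n + 1 - 2 * k) \<noteq> 0"
    using qint_nonzero[OF qk] assms(2,3) by simp_all
  ultimately show ?thesis
    unfolding lcoeff_def using assms(2) qfact_nonzero[OF qk] by (simp add: field_simps)
qed

lemma lcoeff_raise_both:
  assumes qk: "\<forall>k\<ge>1. (q::'a::field) ^ k \<noteq> 1" and "2 * k \<le> n"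
  shows "lcoeff q m (n + 2) (k + 1) * qint q (k + 1) * qint q (m + n + 1)
       = q ^ k * qint q (n + 2) * qint q (n + 1 - 2 * k) * lcoeff q m (n + 1) k"
proof -
  have "qfact q (n + 1 - 2 * k) = qfact q (n - 2 * k) * qint q (n + 1 - 2 * k)"
    using qfact_Suc[of q "n - 2 * k"] assms(2) by (simp add: Suc_diff_le)
  moreover have "qfact q (m + (n + 2) - 1) = qfact q (m + (n + 1) - 1) * qint q (m + n + 1)"
    using qfact_Suc[of q "m + n"] by simp
  moreover have "qfact q (n + 2) = qfact q (n + 1) * qint q (n + 2)"
    using qfact_Suc[of q "n + 1"] by simp
  moreover have "qfact q (k + 1) = qfact q k * qint q (k + 1)"
    using qfact_Suc[of q k] by simp
  moreover have "(k + 1) choose 2 = (k choose 2) + k"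
    by (simp add: numeral_2_eq_2)
  moreover have "m + (n + 2) - (k + 1) - 1 = m + (n + 1) - k - 1" "n + 2 - 2 * (k + 1) = n - 2 * k"
    by simp_all
  moreover have "qint q (k + 1) \<noteq> 0" "qint q (m + n + 1) \<noteq> 0" "qint q (n + 1 - 2 * k) \<noteq> 0"
    using qint_nonzero[OF qk] assms(2) by simp_all
  ultimately show ?thesis
    unfolding lcoeff_def using assms(2) qfact_nonzero[OF qk] by (simp add: field_simps power_add)
qed

lemma lcoeff_raise_k:
  assumes qk: "\<forall>k\<ge>1. (q::'a::field) ^ k \<noteq> 1" and "2 * k \<le> n"
  shows "lcoeff q m (n + 1) (k + 1) * qint q (k + 1) * qint q (m + n - k)
       = q ^ k * qint q (n + 1 - 2 * k) * qint q (n - 2 * k) * lcoeff q m (n + 1) k"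
proof (cases "n = 2 * k")
  case True
  then show ?thesis unfolding lcoeff_def by simp
next
  case False
  then have kn: "2 * k + 1 \<le> n" using assms(2) by simp
  have "qfact q (n + 1 - 2 * k) = qfact q (n - 1 - 2 * k) * qint q (n - 2 * k) * qint q (n + 1 - 2 * k)"
    using qfact_pred[of "n - 2 * k" q] qfact_Suc[of q "n - 2 * k"] kn
    by (simp add: Suc_diff_le)
  moreover have "qfact q (m + (n + 1) - k - 1) = qfact q (m + n - k - 1) * qint q (m + n - k)"
    using qfact_pred[of "m + n - k" q] kn by simp
  moreover have "qfact q (k + 1) = qfact q k * qint q (k + 1)"
    using qfact_Suc[of q k] by simp
  moreover have "(k + 1) choose 2 = (k choose 2) + k"
    by (simp add: numeral_2_eq_2)
  moreover have "m + (n + 1) - (k + 1) - 1 = m + n - k - 1" "n + 1 - 2 * (k + 1) = n - 1 - 2 * k"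
    by simp_all
  moreover have "qint q (k + 1) \<noteq> 0" "qint q (m + n - k) \<noteq> 0" "qint q (n - 2 * k) \<noteq> 0"
      "qint q (n + 1 - 2 * k) \<noteq> 0"
    using qint_nonzero[OF qk] kn by simp_all
  ultimately show ?thesis
    unfolding lcoeff_def using kn qfact_nonzero[OF qk] by (simp add: field_simps power_add)
qed

(* The coefficient recurrence in the generic range 2j <= N, m + N >= 1: every term is
   expressed through Y = c(N+1,j) by the ratio rules, which leaves the key identity. *)
lemma lcoeff_recurrence_generic:
  fixes q :: "'a::field"
  assumes q0: "q \<noteq> 0" and qk: "\<forall>k\<ge>1. q ^ k \<noteq> 1" and jN: "2 * j \<le> N" and mN: "m + N \<ge> 1"
  shows "lcoeff q m (N + 2) (j + 1) = lcoeff q m (N + 1) (j + 1)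
      - inverse (q ^ m) * lcoeff q m (N + 1) j * (1 - q ^ (N + 1 - 2 * j))
      + inverse (q ^ m) * qlambda N m q * lcoeff q m N j"
proof -
  define a where "a = N - 2 * j"
  have N: "N = a + 2 * j" using jN unfolding a_def by simp
  have q1: "q \<noteq> 1" using qk by force
  have nz: "qint q (j + 1) \<noteq> 0" "qint q (m + N + 1) \<noteq> 0" "qint q (m + N - j) \<noteq> 0"
      "qint q (N + 1) \<noteq> 0" "qint q (a + 1) \<noteq> 0" "qint q (m + N) \<noteq> 0" "q ^ m \<noteq> 0"
    using qint_nonzero[OF qk] mN q0 N by simp_all
  define Y where "Y = lcoeff q m (N + 1) j"
  have c2: "lcoeff q m (N + 2) (j + 1)
      = q ^ j * qint q (N + 2) * qint q (a + 1) * Y / (qint q (j + 1) * qint q (m + N + 1))"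
    using lcoeff_raise_both[OF qk jN, of m] nz unfolding Y_def N by (simp add: field_simps)
  have c1: "lcoeff q m (N + 1) (j + 1)
      = q ^ j * qint q (a + 1) * qint q a * Y / (qint q (j + 1) * qint q (m + N - j))"
    using lcoeff_raise_k[OF qk jN, of m] nz unfolding Y_def N by (simp add: field_simps)
  have c0: "lcoeff q m N j = qint q (a + 1) * qint q (m + N) * Y / (qint q (N + 1) * qint q (m + N - j))"
    using lcoeff_raise_n[OF qk jN mN] nz unfolding Y_def N by (simp add: field_simps)
  have lam: "qlambda N m q = qint q (N + 1) * qint q (N + 2 * m) / (qint q (N + m) * qint q (N + m + 1))"
    using qlambda_eq[OF qk mN] nz by (simp add: field_simps)
  have p: "1 - q ^ (N + 1 - 2 * j) = (1 - q) * qint q (a + 1)"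
    unfolding one_minus_q_qint N by simp
  define G where "G = Y * qint q (a + 1) / (q ^ m * qint q (j + 1) * qint q (m + N + 1) * qint q (m + N - j))"
  have "lcoeff q m (N + 2) (j + 1) = G * (q ^ m * q ^ j * qint q (N + 2) * qint q (m + N - j))"
    unfolding c2 G_def using nz q0 by (simp add: field_simps)
  also have "\<dots> = G * (q ^ m * q ^ j * qint q a * qint q (m + N + 1)
       - (1 - q) * qint q (j + 1) * qint q (m + N + 1) * qint q (m + N - j)
       + qint q (j + 1) * qint q (N + 2 * m))"
    by (simp only: key_identity[OF q1 N])
  also have "\<dots> = lcoeff q m (N + 1) (j + 1)
    - inverse (q ^ m) * lcoeff q m (N + 1) j * (1 - q ^ (N + 1 - 2 * j))
    + inverse (q ^ m) * qlambda N m q * lcoeff q m N j"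
    unfolding c1 c0 lam p Y_def[symmetric] G_def using nz q0 by (simp add: field_simps)
  finally show ?thesis .
qed

(* The coefficient recurrence for all j: outside 2j <= N every term vanishes, and the
   degenerate case m = N = 0 (where lambda_0 = 2) is a direct computation. *)
lemma lcoeff_recurrence:
  fixes q :: "'a::field"
  assumes q0: "q \<noteq> 0" and qk: "\<forall>k\<ge>1. q ^ k \<noteq> 1"
  shows "lcoeff q m (N + 2) (j + 1) = lcoeff q m (N + 1) (j + 1)
      - inverse (q ^ m) * lcoeff q m (N + 1) j * (1 - q ^ (N + 1 - 2 * j))
      + inverse (q ^ m) * qlambda N m q * lcoeff q m N j"
proof -
  consider "\<not> 2 * j \<le> N" | "m = 0" "N = 0" | "2 * j \<le> N" "m + N \<ge> 1" by linarith
  then show ?thesis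
  proof cases
    case 1
    then show ?thesis unfolding lcoeff_def by (auto simp: not_le Suc_le_eq)
  next
    case 2
    then show ?thesis
      unfolding lcoeff_def qlambda_def using qfact_nonzero[OF qk]
      by (simp add: qfact_def qint_def numeral_2_eq_2)
  next
    case 3
    then show ?thesis by (rule lcoeff_recurrence_generic[OF q0 qk])
  qed
qed

lemma lpoly_as_sum:
  assumes qk: "\<forall>k\<ge>1. (q::'a::field) ^ k \<noteq> 1" and "n div 2 \<le> R"
  shows "lpoly n x m s q = (\<Sum>k\<le>R. s ^ k * lcoeff q m n k * x ^ (n - 2 * k))"
proof -
  have "(\<Sum>k\<le>R. s ^ k * lcoeff q m n k * x ^ (n - 2 * k))
      = (\<Sum>k\<le>n div 2. s ^ k * lcoeff q m n k * x ^ (n - 2 * k))"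
    by (rule sum.mono_neutral_right) (use assms(2) in \<open>auto simp: lcoeff_def\<close>)
  also have "\<dots> = lpoly n x m s q"
  proof (cases "n = 0")
    case True
    then show ?thesis unfolding lpoly_def using lcoeff_0[OF qk] by simp
  next
    case False
    have "2 * k \<le> n" if "k \<le> n div 2" for k using that by linarith
    then show ?thesis unfolding lcoeff_def lpoly_def using False by (simp add: mult.assoc)
  qed
  finally show ?thesis ..
qed

lemma lpoly_split_leading:
  assumes qk: "\<forall>k\<ge>1. (q::'a::field) ^ k \<noteq> 1" and "n div 2 \<le> R + 1"
  shows "lpoly n x m s q = x ^ n + (\<Sum>j\<le>R. s ^ (j + 1) * lcoeff q m n (j + 1) * x ^ (n - 2 * (j + 1)))"
proof -
  have "lpoly n x m s q = (\<Sum>k\<le>Suc R. s ^ k * lcoeff q m n k * x ^ (n - 2 * k))"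
    using lpoly_as_sum[OF qk] assms(2) by simp
  also have "\<dots> = x ^ n + (\<Sum>j\<le>R. s ^ (j + 1) * lcoeff q m n (j + 1) * x ^ (n - 2 * (j + 1)))"
    unfolding sum.atMost_Suc_shift using lcoeff_0[OF qk] by simp
  finally show ?thesis .
qed

(* Multiplying a monomial by x raises its degree; when 2k > n the coefficient is 0 anyway. *)
lemma lcoeff_times_x: "lcoeff q m n k * x ^ (n - 2 * k) * x = lcoeff q m n k * x ^ (n + 1 - 2 * k)"
  unfolding lcoeff_def by (simp add: Suc_diff_le mult.assoc)

lemma Dq_monomials:
  fixes q x :: "'a::field"
  assumes "q \<noteq> 1" and "x \<noteq> 0"
  shows "Dq q (\<lambda>y. \<Sum>k\<in>K. c k * y ^ d k) x = (\<Sum>k\<in>K. c k * qint q (d k) * x ^ (d k - 1))"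
proof -
  have "(c k * x ^ d k - c k * (q * x) ^ d k) / ((1 - q) * x) = c k * qint q (d k) * x ^ (d k - 1)" for k
  proof (cases "d k")
    case (Suc e)
    have "c k * x ^ d k - c k * (q * x) ^ d k = c k * ((1 - q) * qint q (d k)) * x ^ e * x"
      unfolding one_minus_q_qint Suc by (simp add: algebra_simps)
    then show ?thesis using assms Suc by simp
  qed simp
  then show ?thesis
    unfolding Dq_def sum_subtractf[symmetric] sum_divide_distrib by simp
qed

lemma x_times_lpoly:
  assumes qk: "\<forall>k\<ge>1. (q::'a::field) ^ k \<noteq> 1"
  shows "x * lpoly (N + 1) x m s q
       = x ^ (N + 2) + (\<Sum>j\<le>N. s ^ (j + 1) * lcoeff q m (N + 1) (j + 1) * x ^ (N - 2 * j))"
proof -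
  have raise: "x * (s ^ (j + 1) * lcoeff q m (N + 1) (j + 1) * x ^ (N + 1 - 2 * (j + 1)))
      = s ^ (j + 1) * lcoeff q m (N + 1) (j + 1) * x ^ (N - 2 * j)" for j
    using lcoeff_times_x[of q m "N + 1" "j + 1" x] by (simp add: mult_ac)
  have "x * lpoly (N + 1) x m s q = x * x ^ (N + 1)
      + (\<Sum>j\<le>N. x * (s ^ (j + 1) * lcoeff q m (N + 1) (j + 1) * x ^ (N + 1 - 2 * (j + 1))))"
    by (subst lpoly_split_leading[OF qk, of "N + 1" N]) (simp_all add: distrib_left sum_distrib_left)
  then show ?thesis unfolding raise by simp
qed

lemma Dq_lpoly:
  fixes q x :: "'a::field"
  assumes qk: "\<forall>k\<ge>1. q ^ k \<noteq> 1" and "x \<noteq> 0"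
  shows "(1 - q) * Dq q (\<lambda>y. lpoly (N + 1) y m s q) x
       = (\<Sum>j\<le>N. s ^ j * lcoeff q m (N + 1) j * (1 - q ^ (N + 1 - 2 * j)) * x ^ (N - 2 * j))"
proof -
  have q1: "q \<noteq> 1" using qk by force
  have "(\<lambda>y. lpoly (N + 1) y m s q) = (\<lambda>y. \<Sum>j\<le>N. (s ^ j * lcoeff q m (N + 1) j) * y ^ (N + 1 - 2 * j))"
    using lpoly_as_sum[OF qk, of "N + 1" N] by (simp add: mult.assoc)
  then have "Dq q (\<lambda>y. lpoly (N + 1) y m s q) x
      = (\<Sum>j\<le>N. s ^ j * lcoeff q m (N + 1) j * qint q (N + 1 - 2 * j) * x ^ (N - 2 * j))"
    using Dq_monomials[OF q1 assms(2), of "\<lambda>j. s ^ j * lcoeff q m (N + 1) j" "\<lambda>j. N + 1 - 2 * j" "{..N}"]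
    by simp
  then show ?thesis by (simp add: sum_distrib_left one_minus_q_qint[symmetric] mult_ac)
qed

theorem mainTheorem8:
  fixes x s q :: "'a::field_char_0" and m n :: nat
  assumes "n \<ge> 2"
    and "q \<noteq> 0" and "q \<noteq> 1" and "\<forall>k\<ge>1. q ^ k \<noteq> 1"
    and "x \<noteq> 0"
  shows "lpoly n x m s q =
           x * lpoly (n - 1) x m s q
           - (1 - q) * s * inverse (q ^ m) * Dq q (\<lambda>y. lpoly (n - 1) y m s q) x
           + s * inverse (q ^ m) * qlambda (n - 2) m q * lpoly (n - 2) x m s q"
proof -
  note qk = assms(4)
  obtain N where n: "n = N + 2" using assms(1) by (metis le_add_diff_inverse2)
  then have lowered: "n - 1 = N + 1" "n - 2 = N" by simp_all
  have "lpoly (N + 2) x m s q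
      = x ^ (N + 2) + (\<Sum>j\<le>N. s ^ (j + 1) * lcoeff q m (N + 2) (j + 1) * x ^ (N - 2 * j))"
    using lpoly_split_leading[OF qk, of "N + 2" N] by simp
  also have "\<dots> = x ^ (N + 2) + (\<Sum>j\<le>N. s ^ (j + 1) * lcoeff q m (N + 1) (j + 1) * x ^ (N - 2 * j))
      - s * inverse (q ^ m) * (\<Sum>j\<le>N. s ^ j * lcoeff q m (N + 1) j * (1 - q ^ (N + 1 - 2 * j)) * x ^ (N - 2 * j))
      + s * inverse (q ^ m) * qlambda N m q * (\<Sum>j\<le>N. s ^ j * lcoeff q m N j * x ^ (N - 2 * j))"
    unfolding lcoeff_recurrence[OF assms(2) qk]
    by (simp add: sum_distrib_left sum.distrib sum_subtractf algebra_simps)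
  also have "\<dots> = x * lpoly (N + 1) x m s q
      - (1 - q) * s * inverse (q ^ m) * Dq q (\<lambda>y. lpoly (N + 1) y m s q) x
      + s * inverse (q ^ m) * qlambda N m q * lpoly N x m s q"
    using x_times_lpoly[OF qk] Dq_lpoly[OF qk assms(5)] lpoly_as_sum[OF qk, of N N]
    by (simp add: mult_ac)
  finally show ?thesis unfolding lowered unfolding n .
qed

end
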